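(* If $L\subseteq\Sigma^*$ belongs to $Pol(\mathcal{C}om)(\Sigma)$, then $N^1(L)=O(\log n)$.
   Context: Non-deterministic communication complexity: for $f:X\times Y\to\{0,1\}$, $N^1(f)$ is the minimum cost of a non-deterministic protocol for $f$; equivalently, up to an additive constant 2, $N^1(f)=\log_2 C^1(f)$, where $C^1(f)$ is the minimum number of rectangles $S\times T\subseteq X\times Y$ on which $f\equiv1$ whose union is $f^{-1}(1)$. For a language $L\subseteq\Sigma^*$, $N^1(L)(n)$ is $N^1$ of the function in which Alice receives $a_1,a_3,\dots,a_{2n-1}$, Bob receives $a_2,a_4,\dots,a_{2n}$, each $a_i\in\Sigma\cup\{\epsilon\}$ ($\epsilon$ the empty word), and the value is $1$ iff $a_1a_2\cdots a_{2n}\in L$. $\mathcal{C}om(\Sigma)$ denotes the set of regular languages over $\Sigma$ whose syntactic monoid ($\Sigma^*/\equiv_L$, where $x\equiv_L y$ iff $uxv\in L\Leftrightarrow uyv\in L$ for all $u,v$) is commutative. $Pol(\mathcal{C}om)(\Sigma)$ is the set of finite unions of languages of the form $L_0a_1L_1a_2\cdots a_kL_k$ with $k\ge0$, $a_i\in\Sigma$ and $L_i\in\mathcal{C}om(\Sigma)$. Asymptotics are as $n\to\infty$. *)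

theory Defs
  imports Complex_Main "HOL-Library.Landau_Symbols"
begin

definition regular_lang :: "'a list set \<Rightarrow> bool" where
  "regular_lang L \<longleftrightarrow>
     (\<exists>(Q::nat set) q0 (\<delta>::nat \<Rightarrow> 'a \<Rightarrow> nat) F.
        finite Q \<and> q0 \<in> Q \<and> (\<forall>q\<in>Q. \<forall>a. \<delta> q a \<in> Q) \<and> F \<subseteq> Q \<and>
        L = {w. foldl \<delta> q0 w \<in> F})"

definition syn_cong :: "'a list set \<Rightarrow> 'a list \<Rightarrow> 'a list \<Rightarrow> bool" where
  "syn_cong L x y \<longleftrightarrow> (\<forall>u v. u @ x @ v \<in> L \<longleftrightarrow> u @ y @ v \<in> L)"

text \<open>The syntactic monoid is the quotient of the free monoid by syn_cong, with
  multiplication induced by concatenation; it is commutative iff xy and yx are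
  always congruent.\<close>
definition Com :: "'a list set set" where
  "Com = {L. regular_lang L \<and> (\<forall>x y. syn_cong L (x @ y) (y @ x))}"

definition conc :: "'a list set \<Rightarrow> 'a list set \<Rightarrow> 'a list set" where
  "conc A B = {u @ v | u v. u \<in> A \<and> v \<in> B}"

text \<open>monomial L0 [(a1,L1),...,(ak,Lk)] = L0 a1 L1 a2 ... ak Lk\<close>
fun monomial :: "'a list set \<Rightarrow> ('a \<times> 'a list set) list \<Rightarrow> 'a list set" where
  "monomial L0 [] = L0"
| "monomial L0 ((a, L1) # rest) = conc L0 (conc {[a]} (monomial L1 rest))"

definition PolCom :: "'a list set set" where
  "PolCom = {L. \<exists>ms :: ('a list set \<times> ('a \<times> 'a list set) list) list.
      (\<forall>(L0, ps) \<in> set ms. L0 \<in> Com \<and> (\<forall>(a, Li) \<in> set ps. Li \<in> Com)) \<and>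
      L = (\<Union>(L0, ps) \<in> set ms. monomial L0 ps)}"

definition C1 :: "'x set \<Rightarrow> 'y set \<Rightarrow> ('x \<Rightarrow> 'y \<Rightarrow> bool) \<Rightarrow> nat" where
  "C1 X Y f = (LEAST k. \<exists>R :: ('x set \<times> 'y set) list. length R = k \<and>
      (\<forall>(S, T) \<in> set R. S \<subseteq> X \<and> T \<subseteq> Y \<and> (\<forall>x\<in>S. \<forall>y\<in>T. f x y)) \<and>
      {(x, y). x \<in> X \<and> y \<in> Y \<and> f x y} = (\<Union>(S, T) \<in> set R. S \<times> T))"

definition N1 :: "'x set \<Rightarrow> 'y set \<Rightarrow> ('x \<Rightarrow> 'y \<Rightarrow> bool) \<Rightarrow> real" where
  "N1 X Y f = log 2 (real (C1 X Y f))"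

text \<open>Letters or the empty word: None stands for epsilon.\<close>
definition opt_word :: "'a option \<Rightarrow> 'a list" where
  "opt_word o' = (case o' of None \<Rightarrow> [] | Some a \<Rightarrow> [a])"

text \<open>Alice holds a1,a3,...,a(2n-1) (list xs), Bob holds a2,a4,...,a2n (list ys);
  the word is a1 a2 ... a2n.\<close>
definition interleave_word :: "'a option list \<Rightarrow> 'a option list \<Rightarrow> 'a list" where
  "interleave_word xs ys = concat (map (\<lambda>(a, b). opt_word a @ opt_word b) (zip xs ys))"

definition N1_lang :: "'a list set \<Rightarrow> nat \<Rightarrow> real" where
  "N1_lang L n = N1 {xs. length xs = n} {ys. length ys = n}
                    (\<lambda>xs ys. interleave_word xs ys \<in> L)"

end

theory Submission
  imports Defs "HOL-Library.Multiset" "HOL-Library.FuncSet" "HOL-Real_Asymp.Real_Asymp"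
begin

text \<open>
  A word lies in a monomial \<open>L\<^sub>0 a\<^sub>1 L\<^sub>1 \<dots> a\<^sub>k L\<^sub>k\<close> iff one can mark \<open>k\<close> positions
  carrying \<open>a\<^sub>1, \<dots>, a\<^sub>k\<close> such that the \<open>k + 1\<close> factors between them lie in the \<open>L\<^sub>j\<close>.
  For commutative \<open>L\<^sub>j\<close> membership of a factor depends only on its multiset of letters,
  which is the sum of the contributions of Alice's and of Bob's positions. Hence a
  nondeterministic protocol guesses a monomial, the \<open>k\<close> marked positions and Alice's
  contributions to the \<open>k + 1\<close> factors; Alice verifies her letters and her contributions,
  Bob verifies his letters and that adding his contributions lands in the \<open>L\<^sub>j\<close>. There are
  only polynomially many guesses in \<open>n\<close>, so the rectangle cover is polynomial and
  its logarithm is \<open>O(log n)\<close>.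
\<close>

lemma opt_word_simps [simp]: "opt_word None = []" "opt_word (Some a) = [a]"
  unfolding opt_word_def by simp_all

definition slot_word :: "(nat \<Rightarrow> 'a option) \<Rightarrow> nat \<Rightarrow> nat \<Rightarrow> 'a list" where
  "slot_word slot lo hi = concat (map opt_word (map slot [lo..<hi]))"

lemma slot_word_Suc: "lo \<le> hi \<Longrightarrow> slot_word slot lo (Suc hi) = slot_word slot lo hi @ opt_word (slot hi)"
  by (simp add: slot_word_def)

lemma slot_word_cong:
  "(\<And>i. lo \<le> i \<Longrightarrow> i < hi \<Longrightarrow> f i = g i) \<Longrightarrow> slot_word f lo hi = slot_word g lo hi"
  unfolding slot_word_def by (intro arg_cong[where f = concat] map_cong) auto

lemma concat_opt_word_eq_append_Cons:
  "concat (map opt_word s) = u @ a # v \<Longrightarrow>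
   \<exists>s0 s1. s = s0 @ Some a # s1 \<and> concat (map opt_word s0) = u \<and> concat (map opt_word s1) = v"
proof (induction s arbitrary: u)
  case (Cons x s)
  show ?case
  proof (cases "x = None \<or> u \<noteq> []")
    case True
    then obtain u' where u': "concat (map opt_word s) = u' @ a # v" "u = opt_word x @ u'"
      using Cons.prems by (cases x; cases u) auto
    from Cons.IH[OF u'(1)] obtain s0 s1 where "s = s0 @ Some a # s1"
      "concat (map opt_word s0) = u'" "concat (map opt_word s1) = v" by blast
    with u'(2) show ?thesis by (intro exI[of _ "x # s0"] exI[of _ s1]) simp
  next
    case False
    with Cons.prems show ?thesis by (intro exI[of _ "[]"] exI[of _ s]) auto
  qed
qed simp

lemma slot_word_eq_append_Cons_iff:
  "slot_word slot lo hi = u @ a # v \<longleftrightarrow>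
   (\<exists>q. lo \<le> q \<and> q < hi \<and> slot q = Some a \<and> slot_word slot lo q = u \<and> slot_word slot (Suc q) hi = v)"
proof
  assume "slot_word slot lo hi = u @ a # v"
  then have "concat (map opt_word (map slot [lo..<hi])) = u @ a # v"
    by (simp only: slot_word_def)
  from concat_opt_word_eq_append_Cons[OF this] obtain s0 s1 where
    s: "map slot [lo..<hi] = s0 @ Some a # s1" "concat (map opt_word s0) = u" "concat (map opt_word s1) = v"
    by blast
  define q where "q = lo + length s0"
  from arg_cong[OF s(1), of length] have len: "hi - lo = length s0 + Suc (length s1)" by simp
  have "take (length s0) (map slot [lo..<hi]) = s0" "drop (Suc (length s0)) (map slot [lo..<hi]) = s1"
    "map slot [lo..<hi] ! length s0 = Some a" unfolding s(1) by simp_all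
  then have "map slot [lo..<q] = s0" "map slot [Suc q..<hi] = s1" "slot q = Some a"
    using len by (simp_all add: q_def take_map drop_map)
  with s(2,3) len show "\<exists>q. lo \<le> q \<and> q < hi \<and> slot q = Some a \<and> slot_word slot lo q = u \<and> slot_word slot (Suc q) hi = v"
    unfolding slot_word_def by (intro exI[of _ q]) (auto simp: q_def)
next
  assume "\<exists>q. lo \<le> q \<and> q < hi \<and> slot q = Some a \<and> slot_word slot lo q = u \<and> slot_word slot (Suc q) hi = v"
  then obtain q where q: "lo \<le> q" "q < hi" "slot q = Some a" "slot_word slot lo q = u" "slot_word slot (Suc q) hi = v"
    by blast
  have "[lo..<hi] = [lo..<q] @ q # [Suc q..<hi]"
    using q(1,2) by (metis le_less_trans less_imp_le_nat upt_conv_Cons upt_add_eq_append le_add_diff_inverse)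
  with q show "slot_word slot lo hi = u @ a # v" by (simp add: slot_word_def)
qed

fun monomial_witness ::
  "(nat \<Rightarrow> 'a \<Rightarrow> bool) \<Rightarrow> ('l \<Rightarrow> nat \<Rightarrow> nat \<Rightarrow> 'c \<Rightarrow> bool) \<Rightarrow> 'l \<Rightarrow> ('a \<times> 'l) list \<Rightarrow>
   nat \<Rightarrow> nat \<Rightarrow> nat list \<Rightarrow> 'c list \<Rightarrow> bool" where
  "monomial_witness letter seg L0 [] lo hi [] [c] = seg L0 lo hi c"
| "monomial_witness letter seg L0 ((a, L1) # ps) lo hi (q # qs) (c # cs) =
     (lo \<le> q \<and> q < hi \<and> letter q a \<and> seg L0 lo q c \<and> monomial_witness letter seg L1 ps (Suc q) hi qs cs)"
| "monomial_witness _ _ _ _ _ _ _ _ = False"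

lemma monomial_witness_Nil_iff:
  "monomial_witness letter seg L0 [] lo hi qs cs \<longleftrightarrow> qs = [] \<and> (\<exists>c. cs = [c] \<and> seg L0 lo hi c)"
  by (cases qs; cases cs; cases "tl cs") auto

lemma monomial_witness_Cons_iff:
  "monomial_witness letter seg L0 ((a, L1) # ps) lo hi qs cs \<longleftrightarrow>
   (\<exists>q qs' c cs'. qs = q # qs' \<and> cs = c # cs' \<and> lo \<le> q \<and> q < hi \<and> letter q a \<and> seg L0 lo q c \<and>
      monomial_witness letter seg L1 ps (Suc q) hi qs' cs')"
  by (cases qs; cases cs) auto

text \<open>The annotations are unconstrained here; tying them to an arbitrary \<open>f\<close> lets the
  witness later carry Alice's contributions.\<close>
lemma slot_word_in_monomial_iff:
  "slot_word slot lo hi \<in> monomial L0 ps \<longleftrightarrow>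
   (\<exists>qs cs. monomial_witness (\<lambda>q a. slot q = Some a) (\<lambda>L i j c. c = f i j \<and> slot_word slot i j \<in> L)
      L0 ps lo hi qs cs)"
proof (induction ps arbitrary: L0 lo)
  case Nil
  then show ?case by (auto simp: monomial_witness_Nil_iff)
next
  case (Cons p ps)
  obtain a L1 where p: "p = (a, L1)" by fastforce
  have "slot_word slot lo hi \<in> monomial L0 (p # ps) \<longleftrightarrow>
    (\<exists>q. lo \<le> q \<and> q < hi \<and> slot q = Some a \<and> slot_word slot lo q \<in> L0 \<and>
         slot_word slot (Suc q) hi \<in> monomial L1 ps)"
  proof -
    have "slot_word slot lo hi \<in> monomial L0 (p # ps) \<longleftrightarrow>
      (\<exists>u v. slot_word slot lo hi = u @ a # v \<and> u \<in> L0 \<and> v \<in> monomial L1 ps)"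
      by (auto simp: p conc_def)
    then show ?thesis
      unfolding slot_word_eq_append_Cons_iff by blast
  qed
  also have "\<dots> \<longleftrightarrow> (\<exists>qs cs. monomial_witness (\<lambda>q a. slot q = Some a)
      (\<lambda>L i j c. c = f i j \<and> slot_word slot i j \<in> L) L0 (p # ps) lo hi qs cs)"
    unfolding p monomial_witness_Cons_iff Cons.IH by blast
  finally show ?case .
qed

lemma monomial_witness_cong:
  assumes "\<And>q a. letter q a \<longleftrightarrow> letter' q a"
    and "\<And>L i j c. L \<in> insert L0 (snd ` set ps) \<Longrightarrow> seg L i j c \<longleftrightarrow> seg' L i j c"
  shows "monomial_witness letter seg L0 ps lo hi qs cs \<longleftrightarrow> monomial_witness letter' seg' L0 ps lo hi qs cs"
  using assms by (induction letter seg L0 ps lo hi qs cs rule: monomial_witness.induct) auto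

lemma monomial_witness_conj:
  "monomial_witness letter seg L0 ps lo hi qs cs \<and> monomial_witness letter' seg' L0 ps lo hi qs cs \<longleftrightarrow>
   monomial_witness (\<lambda>q a. letter q a \<and> letter' q a) (\<lambda>L i j c. seg L i j c \<and> seg' L i j c) L0 ps lo hi qs cs"
  by (induction letter seg L0 ps lo hi qs cs rule: monomial_witness.induct) auto

lemma monomial_witness_bounds:
  assumes "monomial_witness letter seg L0 ps lo hi qs cs"
    and "\<And>L i j c. seg L i j c \<Longrightarrow> j \<le> hi \<Longrightarrow> c \<in> C"
  shows "set qs \<subseteq> {..<hi} \<and> length qs = length ps \<and> set cs \<subseteq> C \<and> length cs = Suc (length ps)"
  using assms by (induction letter seg L0 ps lo hi qs cs rule: monomial_witness.induct) auto

definition interleave_slots :: "(nat \<Rightarrow> 'a option) \<Rightarrow> (nat \<Rightarrow> 'a option) \<Rightarrow> nat \<Rightarrow> 'a option" where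
  "interleave_slots sa sb i = (if even i then sa i else sb i)"

lemma interleave_word_eq_slot_word:
  assumes "length xs = length ys"
  shows "interleave_word xs ys =
    slot_word (interleave_slots (\<lambda>i. xs ! (i div 2)) (\<lambda>i. ys ! (i div 2))) 0 (2 * length xs)"
  using assms
proof (induction xs ys rule: rev_induct2)
  case (4 x xs y ys)
  have len: "length xs = length ys" using "4.prems" by simp
  let ?n = "2 * length xs"
  let ?S = "interleave_slots (\<lambda>i. (xs @ [x]) ! (i div 2)) (\<lambda>i. (ys @ [y]) ! (i div 2))"
  have "interleave_word (xs @ [x]) (ys @ [y]) = interleave_word xs ys @ opt_word x @ opt_word y"
    using len by (simp add: interleave_word_def)
  also have "interleave_word xs ys = slot_word ?S 0 ?n"
    unfolding "4.IH"[OF len] using len by (intro slot_word_cong) (auto simp: interleave_slots_def nth_append)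
  also have "opt_word x @ opt_word y = opt_word (?S ?n) @ opt_word (?S (Suc ?n))"
    using len by (simp add: interleave_slots_def nth_append)
  also have "slot_word ?S 0 ?n @ opt_word (?S ?n) @ opt_word (?S (Suc ?n)) = slot_word ?S 0 (2 * length (xs @ [x]))"
    by (simp add: slot_word_Suc)
  finally show ?case .
qed (simp_all add: interleave_word_def slot_word_def)

lemma commutative_mem_iff_perm:
  assumes "\<forall>x y. syn_cong L (x @ y) (y @ x)" "mset u = mset v"
  shows "pre @ u @ suf \<in> L \<longleftrightarrow> pre @ v @ suf \<in> L"
  using assms(2)
proof (induction u arbitrary: v pre)
  case (Cons a u)
  then obtain v1 v2 where v: "v = v1 @ a # v2"
    by (metis list.set_intros(1) set_mset_mset split_list)
  with Cons.prems have u: "mset u = mset (v1 @ v2)" by simp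
  have "pre @ (a # u) @ suf \<in> L \<longleftrightarrow> (pre @ [a]) @ (v1 @ v2) @ suf \<in> L"
    using Cons.IH[OF u, of "pre @ [a]"] by simp
  also have "\<dots> \<longleftrightarrow> pre @ ([a] @ v1) @ (v2 @ suf) \<in> L"
    by simp
  also have "\<dots> \<longleftrightarrow> pre @ (v1 @ [a]) @ (v2 @ suf) \<in> L"
    using assms(1) unfolding syn_cong_def by blast
  finally show ?case by (simp add: v)
qed simp

lemma Com_mem_iff_mset:
  assumes "L \<in> Com"
  shows "w \<in> L \<longleftrightarrow> mset w \<in> mset ` L"
proof
  assume "mset w \<in> mset ` L"
  then obtain w' where "w' \<in> L" "mset w' = mset w" by auto
  with commutative_mem_iff_perm[of L w' w "[]" "[]"] assms show "w \<in> L"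
    by (simp add: Com_def)
qed simp

definition slots_mset :: "(nat \<Rightarrow> bool) \<Rightarrow> (nat \<Rightarrow> 'a option) \<Rightarrow> nat \<Rightarrow> nat \<Rightarrow> 'a multiset" where
  "slots_mset P slot lo hi = (\<Sum>i\<in>{lo..<hi}. if P i then mset (opt_word (slot i)) else {#})"

lemma mset_slot_word_interleave_slots:
  "mset (slot_word (interleave_slots sa sb) lo hi) = slots_mset even sa lo hi + slots_mset odd sb lo hi"
proof -
  have "mset (slot_word (interleave_slots sa sb) lo hi) = (\<Sum>i\<in>{lo..<hi}. mset (opt_word (interleave_slots sa sb i)))"
    by (simp add: slot_word_def mset_concat sum_set_upt_conv_sum_list_nat[symmetric] o_def)
  also have "\<dots> = slots_mset even sa lo hi + slots_mset odd sb lo hi"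
    unfolding slots_mset_def sum.distrib[symmetric] by (rule sum.cong) (auto simp: interleave_slots_def)
  finally show ?thesis .
qed

lemma size_slots_mset: "size (slots_mset P slot lo hi) \<le> hi - lo"
proof -
  have "size (slots_mset P slot lo hi) \<le> (\<Sum>i\<in>{lo..<hi}. (1::nat))"
    unfolding slots_mset_def size_multiset_sum by (rule sum_mono) (auto simp: opt_word_def split: option.split)
  then show ?thesis by simp
qed

definition alice_test ::
  "nat \<Rightarrow> (nat \<Rightarrow> 'a option) \<Rightarrow> 'a list set \<Rightarrow> ('a \<times> 'a list set) list \<Rightarrow> nat list \<Rightarrow> 'a multiset list \<Rightarrow> bool"
where
  "alice_test hi sa L0 ps qs cs =
     monomial_witness (\<lambda>q a. even q \<longrightarrow> sa q = Some a) (\<lambda>_ i j c. c = slots_mset even sa i j) L0 ps 0 hi qs cs"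

definition bob_test ::
  "nat \<Rightarrow> (nat \<Rightarrow> 'a option) \<Rightarrow> 'a list set \<Rightarrow> ('a \<times> 'a list set) list \<Rightarrow> nat list \<Rightarrow> 'a multiset list \<Rightarrow> bool"
where
  "bob_test hi sb L0 ps qs cs =
     monomial_witness (\<lambda>q a. odd q \<longrightarrow> sb q = Some a) (\<lambda>L i j c. c + slots_mset odd sb i j \<in> mset ` L)
       L0 ps 0 hi qs cs"

lemma interleave_slots_in_monomial_iff:
  assumes "L0 \<in> Com" "\<forall>(a, L) \<in> set ps. L \<in> Com"
  shows "slot_word (interleave_slots sa sb) 0 hi \<in> monomial L0 ps \<longleftrightarrow>
    (\<exists>qs cs. alice_test hi sa L0 ps qs cs \<and> bob_test hi sb L0 ps qs cs)"
proof -
  have letter: "interleave_slots sa sb q = Some a \<longleftrightarrow> (even q \<longrightarrow> sa q = Some a) \<and> (odd q \<longrightarrow> sb q = Some a)"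
    for q a by (simp add: interleave_slots_def)
  have segment: "c = slots_mset even sa i j \<and> slot_word (interleave_slots sa sb) i j \<in> L \<longleftrightarrow>
      c = slots_mset even sa i j \<and> c + slots_mset odd sb i j \<in> mset ` L"
    if "L \<in> insert L0 (snd ` set ps)" for L i j c
  proof -
    from that assms have "L \<in> Com" by auto
    then show ?thesis
      using Com_mem_iff_mset[of L "slot_word (interleave_slots sa sb) i j"]
      by (cases "c = slots_mset even sa i j") (simp_all add: mset_slot_word_interleave_slots)
  qed
  have "monomial_witness (\<lambda>q a. interleave_slots sa sb q = Some a)
      (\<lambda>L i j c. c = slots_mset even sa i j \<and> slot_word (interleave_slots sa sb) i j \<in> L) L0 ps 0 hi qs cs \<longleftrightarrow>
    alice_test hi sa L0 ps qs cs \<and> bob_test hi sb L0 ps qs cs" for qs cs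
    unfolding alice_test_def bob_test_def monomial_witness_conj
    by (intro monomial_witness_cong letter segment)
  then show ?thesis
    unfolding slot_word_in_monomial_iff[where f = "slots_mset even sa"] by blast
qed

lemma alice_test_bounds:
  assumes "alice_test hi sa L0 ps qs cs"
  shows "set qs \<subseteq> {..<hi} \<and> length qs = length ps \<and> set cs \<subseteq> {M. size M \<le> hi} \<and> length cs = Suc (length ps)"
  using assms unfolding alice_test_def
proof (rule monomial_witness_bounds)
  fix L i j c
  assume "c = slots_mset even sa i j" "j \<le> hi"
  then show "c \<in> {M. size M \<le> hi}"
    using size_slots_mset[of even sa i j] by simp
qed

lemma C1_le_card:
  assumes "finite G" "\<And>x y. x \<in> X \<Longrightarrow> y \<in> Y \<Longrightarrow> f x y \<longleftrightarrow> (\<exists>g\<in>G. A g x \<and> B g y)"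
  shows "C1 X Y f \<le> card G"
proof -
  obtain gs where gs: "set gs = G" "distinct gs"
    using finite_distinct_list[OF assms(1)] by blast
  define R where "R = map (\<lambda>g. ({x\<in>X. A g x}, {y\<in>Y. B g y})) gs"
  have "length R = card G"
    using gs distinct_card by (fastforce simp: R_def)
  moreover have "\<forall>(S, T) \<in> set R. S \<subseteq> X \<and> T \<subseteq> Y \<and> (\<forall>x\<in>S. \<forall>y\<in>T. f x y)"
    using assms(2) gs by (auto simp: R_def)
  moreover have "{(x, y). x \<in> X \<and> y \<in> Y \<and> f x y} = (\<Union>(S, T) \<in> set R. S \<times> T)"
    using assms(2) gs by (auto simp: R_def)
  ultimately show ?thesis
    unfolding C1_def by (intro Least_le) blast
qed

lemma count_multisets_size_le:
  "count ` {M :: 'a multiset. size M \<le> h} \<subseteq> PiE UNIV (\<lambda>_. {0..h})"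
  using count_le_size order.trans by (fastforce simp: PiE_UNIV_domain)

lemma finite_multisets_size_le: "finite {M :: 'a::finite multiset. size M \<le> h}"
  using count_multisets_size_le by (rule finite_imageD[OF finite_subset]) (auto intro: inj_onI finite_PiE simp: count_inject)

lemma card_multisets_size_le: "card {M :: 'a::finite multiset. size M \<le> h} \<le> (h + 1) ^ card (UNIV :: 'a set)"
proof -
  have "card {M :: 'a multiset. size M \<le> h} \<le> card (PiE (UNIV :: 'a set) (\<lambda>_. {0..h}))"
    using count_multisets_size_le by (rule card_inj_on_le[rotated]) (auto intro: inj_onI finite_PiE simp: count_inject)
  then show ?thesis by (simp add: card_PiE)
qed

definition guesses ::
  "('l \<times> ('a \<times> 'l) list) list \<Rightarrow> nat \<Rightarrow> (('l \<times> ('a \<times> 'l) list) \<times> nat list \<times> 'a multiset list) set"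
where
  "guesses ms hi = (SIGMA m:set ms. {qs. set qs \<subseteq> {..<hi} \<and> length qs = length (snd m)} \<times>
     {cs. set cs \<subseteq> {M. size M \<le> hi} \<and> length cs = Suc (length (snd m))})"

lemma finite_guesses: "finite (guesses ms hi :: (_ \<times> _ \<times> 'a::finite multiset list) set)"
  unfolding guesses_def
  by (intro finite_SigmaI finite_cartesian_product finite_lists_length_eq finite_multisets_size_le) auto

lemma card_guesses_le:
  fixes ms :: "('l \<times> ('a::finite \<times> 'l) list) list"
  assumes "\<forall>m\<in>set ms. length (snd m) + card (UNIV :: 'a set) * Suc (length (snd m)) \<le> D"
  shows "card (guesses ms hi) \<le> card (set ms) * (hi + 1) ^ D"
proof -
  have "card (guesses ms hi) = (\<Sum>m\<in>set ms. hi ^ length (snd m) *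
      card {M :: 'a multiset. size M \<le> hi} ^ Suc (length (snd m)))"
    unfolding guesses_def
    by (simp add: card_SigmaI finite_lists_length_eq finite_multisets_size_le card_cartesian_product
        card_lists_length_eq)
  also have "\<dots> \<le> (\<Sum>m\<in>set ms. (hi + 1) ^ length (snd m) * ((hi + 1) ^ card (UNIV :: 'a set)) ^ Suc (length (snd m)))"
    by (intro sum_mono mult_mono power_mono card_multisets_size_le) auto
  also have "\<dots> \<le> (\<Sum>m\<in>set ms. (hi + 1) ^ D)"
    using assms by (intro sum_mono) (simp add: power_add[symmetric] power_mult[symmetric] power_increasing)
  finally show ?thesis by simp
qed

lemma interleave_word_in_monomials_iff:
  fixes ms :: "('a list set \<times> ('a \<times> 'a list set) list) list"
  assumes Com: "\<forall>(L0, ps) \<in> set ms. L0 \<in> Com \<and> (\<forall>(a, L) \<in> set ps. L \<in> Com)"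
    and "length xs = n" "length ys = n"
  shows "interleave_word xs ys \<in> (\<Union>(L0, ps) \<in> set ms. monomial L0 ps) \<longleftrightarrow>
    (\<exists>((L0, ps), qs, cs) \<in> guesses ms (2 * n).
       alice_test (2 * n) (\<lambda>i. xs ! (i div 2)) L0 ps qs cs \<and> bob_test (2 * n) (\<lambda>i. ys ! (i div 2)) L0 ps qs cs)"
    (is "_ \<longleftrightarrow> (\<exists>((L0, ps), qs, cs) \<in> _. ?alice L0 ps qs cs \<and> ?bob L0 ps qs cs)")
proof -
  let ?w = "slot_word (interleave_slots (\<lambda>i. xs ! (i div 2)) (\<lambda>i. ys ! (i div 2))) 0 (2 * n)"
  have "interleave_word xs ys \<in> (\<Union>(L0, ps) \<in> set ms. monomial L0 ps) \<longleftrightarrow>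
      (\<exists>(L0, ps) \<in> set ms. ?w \<in> monomial L0 ps)"
    using assms(2,3) by (auto simp: interleave_word_eq_slot_word)
  also have "\<dots> \<longleftrightarrow> (\<exists>(L0, ps) \<in> set ms. \<exists>qs cs. ?alice L0 ps qs cs \<and> ?bob L0 ps qs cs)"
  proof (intro bex_cong refl, clarify)
    fix L0 ps assume "(L0, ps) \<in> set ms"
    with Com have "L0 \<in> Com" "\<forall>(a, L) \<in> set ps. L \<in> Com" by auto
    then show "?w \<in> monomial L0 ps \<longleftrightarrow> (\<exists>qs cs. ?alice L0 ps qs cs \<and> ?bob L0 ps qs cs)"
      by (rule interleave_slots_in_monomial_iff)
  qed
  also have "\<dots> \<longleftrightarrow> (\<exists>((L0, ps), qs, cs) \<in> guesses ms (2 * n). ?alice L0 ps qs cs \<and> ?bob L0 ps qs cs)"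
  proof
    assume "\<exists>(L0, ps) \<in> set ms. \<exists>qs cs. ?alice L0 ps qs cs \<and> ?bob L0 ps qs cs"
    then obtain L0 ps qs cs where "(L0, ps) \<in> set ms" "?alice L0 ps qs cs" "?bob L0 ps qs cs"
      by blast
    moreover from this have "((L0, ps), qs, cs) \<in> guesses ms (2 * n)"
      by (simp add: guesses_def alice_test_bounds)
    ultimately show "\<exists>((L0, ps), qs, cs) \<in> guesses ms (2 * n). ?alice L0 ps qs cs \<and> ?bob L0 ps qs cs"
      by (intro bexI[of _ "((L0, ps), qs, cs)"]) simp_all
  qed (auto simp: guesses_def)
  finally show ?thesis .
qed

lemma C1_interleave_monomials_le:
  fixes ms :: "('a::finite list set \<times> ('a \<times> 'a list set) list) list"
  assumes Com: "\<forall>(L0, ps) \<in> set ms. L0 \<in> Com \<and> (\<forall>(a, L) \<in> set ps. L \<in> Com)"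
    and D: "\<forall>m\<in>set ms. length (snd m) + card (UNIV :: 'a set) * Suc (length (snd m)) \<le> D"
  shows "C1 {xs. length xs = n} {ys. length ys = n}
      (\<lambda>xs ys. interleave_word xs ys \<in> (\<Union>(L0, ps) \<in> set ms. monomial L0 ps)) \<le> card (set ms) * (2 * n + 1) ^ D"
proof -
  have "C1 {xs. length xs = n} {ys. length ys = n}
      (\<lambda>xs ys. interleave_word xs ys \<in> (\<Union>(L0, ps) \<in> set ms. monomial L0 ps)) \<le> card (guesses ms (2 * n))"
    by (rule C1_le_card[OF finite_guesses,
          where A = "\<lambda>((L0, ps), qs, cs) xs. alice_test (2 * n) (\<lambda>i. xs ! (i div 2)) L0 ps qs cs"
            and B = "\<lambda>((L0, ps), qs, cs) ys. bob_test (2 * n) (\<lambda>i. ys ! (i div 2)) L0 ps qs cs"])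
      (use interleave_word_in_monomials_iff[OF Com] in \<open>simp add: split_beta\<close>)
  also have "\<dots> \<le> card (set ms) * (2 * n + 1) ^ D"
    by (rule card_guesses_le[OF D])
  finally show ?thesis .
qed

lemma log_poly_bound_bigo_ln:
  fixes C :: "nat \<Rightarrow> nat"
  assumes bound: "\<And>n. C n \<le> K * (2 * n + 1) ^ D"
  shows "(\<lambda>n. log 2 (real (C n))) \<in> O(\<lambda>n. ln (real n))"
proof -
  define K' where "K' = max 1 (real K)"
  have "0 < K'" by (simp add: K'_def)
  have "(\<lambda>n. log 2 (real (C n))) \<in> O(\<lambda>n. log 2 K' + real D * log 2 (2 * real n + 1))"
  proof (intro landau_o.big_mono always_eventually allI)
    fix n
    have "0 \<le> log 2 K'" "0 \<le> log 2 (2 * real n + 1)"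
      by (simp_all add: K'_def)
    then have nonneg: "0 \<le> log 2 K' + real D * log 2 (2 * real n + 1)"
      by simp
    moreover have "\<bar>log 2 (real (C n))\<bar> \<le> log 2 K' + real D * log 2 (2 * real n + 1)"
    proof (cases "C n = 0")
      case False
      have "real (C n) \<le> real (K * (2 * n + 1) ^ D)"
        using bound[of n] by (simp only: of_nat_le_iff)
      also have "\<dots> = real K * (2 * real n + 1) ^ D"
        by (simp add: add.commute)
      also have "\<dots> \<le> K' * (2 * real n + 1) ^ D"
        unfolding K'_def by (intro mult_right_mono) auto
      finally have "log 2 (real (C n)) \<le> log 2 (K' * (2 * real n + 1) ^ D)"
        using False by (intro log_mono) auto
      also have "\<dots> = log 2 K' + real D * log 2 (2 * real n + 1)"
        using \<open>0 < K'\<close> by (simp add: log_mult log_nat_power)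
      finally show ?thesis
        using False by simp
    qed (use nonneg in \<open>simp add: log_def\<close>) \<comment> \<open>\<open>log 2 0 = 0\<close>\<close>
    ultimately show "norm (log 2 (real (C n))) \<le> norm (log 2 K' + real D * log 2 (2 * real n + 1))"
      by simp
  qed
  also have "(\<lambda>n. log 2 K' + real D * log 2 (2 * real n + 1)) \<in> O(\<lambda>n. ln (real n))"
    by real_asymp
  finally show ?thesis .
qed

theorem mainTheorem8:
  fixes L :: "'a::finite list set"
  assumes "L \<in> PolCom"
  shows "N1_lang L \<in> O(\<lambda>n. ln (real n))"
proof -
  from assms obtain ms :: "('a list set \<times> ('a \<times> 'a list set) list) list" where
    Com: "\<forall>(L0, ps) \<in> set ms. L0 \<in> Com \<and> (\<forall>(a, L) \<in> set ps. L \<in> Com)" and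
    L: "L = (\<Union>(L0, ps) \<in> set ms. monomial L0 ps)"
    unfolding PolCom_def by blast
  define D where "D = Max ((\<lambda>m. length (snd m) + card (UNIV :: 'a set) * Suc (length (snd m))) ` set ms)"
  have "C1 {xs. length xs = n} {ys. length ys = n} (\<lambda>xs ys. interleave_word xs ys \<in> L)
      \<le> card (set ms) * (2 * n + 1) ^ D" for n
    unfolding L by (rule C1_interleave_monomials_le[OF Com]) (simp add: D_def)
  then show ?thesis
    unfolding N1_lang_def N1_def by (rule log_poly_bound_bigo_ln)
qed

end
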